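(* Let $f:2^V\to\mathbb{Z}_{\ge0}$ be a connectivity function, $W\subseteq V$, and $(C_1,C_2,C_3)$ a $W$-improvement. Suppose that for some $W'\subseteq W$ it holds that $f(C_1\cap W')\ge f(W')$. Then for $C_1'=C_1\cup W'$ it holds that $f(C_1'\cap W)<f(W)$.
   Context: A connectivity function $f:2^V\to\mathbb{Z}_{\ge0}$ ($V$ finite) satisfies $f(\emptyset)=0$, $f(X)=f(V\setminus X)$, and $f(X\cup Y)+f(X\cap Y)\le f(X)+f(Y)$. For $W\subseteq V$, a $W$-improvement is a tripartition $(C_1,C_2,C_3)$ of $V$ (pairwise disjoint, possibly empty, union $V$) with $f(C_i)<f(W)/2$, $f(C_i\cap W)<f(W)$, $f(C_i\cap(V\setminus W))<f(W)$ for each $i$. *)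

theory Defs
  imports Complex_Main
begin

definition connectivity_function :: "'a set \<Rightarrow> ('a set \<Rightarrow> nat) \<Rightarrow> bool" where
  "connectivity_function V f \<longleftrightarrow>
     finite V \<and> f {} = 0 \<and>
     (\<forall>X. X \<subseteq> V \<longrightarrow> f X = f (V - X)) \<and>
     (\<forall>X Y. X \<subseteq> V \<longrightarrow> Y \<subseteq> V \<longrightarrow> f (X \<union> Y) + f (X \<inter> Y) \<le> f X + f Y)"

definition W_improvement :: "'a set \<Rightarrow> ('a set \<Rightarrow> nat) \<Rightarrow> 'a set \<Rightarrow> 'a set \<Rightarrow> 'a set \<Rightarrow> 'a set \<Rightarrow> bool" where
  "W_improvement V f W C1 C2 C3 \<longleftrightarrow>
     C1 \<inter> C2 = {} \<and> C1 \<inter> C3 = {} \<and> C2 \<inter> C3 = {} \<and> C1 \<union> C2 \<union> C3 = V \<and>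
     (\<forall>C \<in> {C1, C2, C3}.
        real (f C) < real (f W) / 2 \<and> f (C \<inter> W) < f W \<and> f (C \<inter> (V - W)) < f W)"

end

theory Submission
  imports Defs
begin

lemma connectivity_function_submodular:
  assumes "connectivity_function V f" and "X \<subseteq> V" and "Y \<subseteq> V"
  shows "f (X \<union> Y) + f (X \<inter> Y) \<le> f X + f Y"
  using assms unfolding connectivity_function_def by blast

lemma connectivity_function_union_le:
  assumes "connectivity_function V f" and "X \<subseteq> V" and "Y \<subseteq> V"
    and "f Y \<le> f (X \<inter> Y)"
  shows "f (X \<union> Y) \<le> f X"
  using connectivity_function_submodular[OF assms(1-3)] assms(4) by linarith

lemma W_improvement_part_inter_less:
  assumes "W_improvement V f W C1 C2 C3" and "C \<in> {C1, C2, C3}"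
  shows "f (C \<inter> W) < f W"
  using assms unfolding W_improvement_def by blast

theorem lemma5:
  fixes V W W' C1 C2 C3 :: "'a set" and f :: "'a set \<Rightarrow> nat"
  assumes "connectivity_function V f"
    and "W \<subseteq> V"
    and "W_improvement V f W C1 C2 C3"
    and "W' \<subseteq> W"
    and "f (C1 \<inter> W') \<ge> f W'"
  shows "f ((C1 \<union> W') \<inter> W) < f W"
proof -
  have split: "(C1 \<union> W') \<inter> W = (C1 \<inter> W) \<union> W'"
    and overlap: "(C1 \<inter> W) \<inter> W' = C1 \<inter> W'"
    using assms(4) by blast+
  have "f ((C1 \<inter> W) \<union> W') \<le> f (C1 \<inter> W)"
    using assms(2,4,5) overlap
    by (intro connectivity_function_union_le[OF assms(1)]) auto
  also have "\<dots> < f W"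
    using W_improvement_part_inter_less[OF assms(3)] by simp
  finally show ?thesis
    unfolding split .
qed

end
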